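(* Let $G$ be a row stratified grid-labelled graph of type $(a,b)$, and for $1\le i<a$ let $S_i$ be the grid-labelled graph of type $(a,b)$ whose edges are the diagonal edges of $G$ with one endpoint in row $i$ and the other in row $i+1$. If $G$ satisfies the degree criterion, then each $S_i$ satisfies the degree criterion. The analogous statement holds for column stratified graphs, with $S_j$ ($1\le j<b$) consisting of the diagonal edges between columns $j$ and $j+1$.
   Context: A grid-labelled graph of type $(a,b)$ is a simple graph whose vertex set is the grid $[a]\times[b]$. An edge $\{(i,j),(k,l)\}$ is diagonal if $i\neq k$ and $j\neq l$. $G$ is row stratified if every diagonal edge $\{(i,j),(k,l)\}$ satisfies $|i-k|=1$, and column stratified if every diagonal edge satisfies $|j-l|=1$. The partial transpose $\Gamma(G)$ is the grid-labelled graph with edge set $\{\{(k,j),(i,l)\}:\{(i,j),(k,l)\}\in E(G)\}$; $G$ satisfies the degree criterion if every vertex has the same degree in $G$ and in $\Gamma(G)$. *)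

theory Defs
  imports Main
begin

type_synonym vertex = "nat \<times> nat"
type_synonym edgeset = "vertex set set"

definition grid :: "nat \<Rightarrow> nat \<Rightarrow> vertex set" where
  "grid a b = {1..a} \<times> {1..b}"

definition grid_graph :: "nat \<Rightarrow> nat \<Rightarrow> edgeset \<Rightarrow> bool" where
  "grid_graph a b E \<longleftrightarrow> (\<forall>e\<in>E. \<exists>u v. e = {u, v} \<and> u \<noteq> v \<and> u \<in> grid a b \<and> v \<in> grid a b)"

definition diagonal :: "vertex set \<Rightarrow> bool" where
  "diagonal e \<longleftrightarrow> (\<exists>i j k l. e = {(i,j),(k,l)} \<and> i \<noteq> k \<and> j \<noteq> l)"

definition row_stratified :: "edgeset \<Rightarrow> bool" where
  "row_stratified E \<longleftrightarrow>
     (\<forall>i j k l. {(i,j),(k,l)} \<in> E \<and> i \<noteq> k \<and> j \<noteq> l \<longrightarrow> (i = k + 1 \<or> k = i + 1))"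

definition col_stratified :: "edgeset \<Rightarrow> bool" where
  "col_stratified E \<longleftrightarrow>
     (\<forall>i j k l. {(i,j),(k,l)} \<in> E \<and> i \<noteq> k \<and> j \<noteq> l \<longrightarrow> (j = l + 1 \<or> l = j + 1))"

definition partial_transpose :: "edgeset \<Rightarrow> edgeset" where
  "partial_transpose E = {{(k,j),(i,l)} | i j k l. {(i,j),(k,l)} \<in> E}"

definition degree :: "edgeset \<Rightarrow> vertex \<Rightarrow> nat" where
  "degree E v = card {e \<in> E. v \<in> e}"

definition degree_criterion :: "nat \<Rightarrow> nat \<Rightarrow> edgeset \<Rightarrow> bool" where
  "degree_criterion a b E \<longleftrightarrow>
     (\<forall>v\<in>grid a b. degree E v = degree (partial_transpose E) v)"

definition row_slice :: "edgeset \<Rightarrow> nat \<Rightarrow> edgeset" where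
  "row_slice E i = {e \<in> E. diagonal e \<and> (\<exists>j l. e = {(i,j),(i+1,l)})}"

definition col_slice :: "edgeset \<Rightarrow> nat \<Rightarrow> edgeset" where
  "col_slice E j = {e \<in> E. diagonal e \<and> (\<exists>i k. e = {(i,j),(k,j+1)})}"

end

theory Submission
  imports Defs
begin

text \<open>Partial transposition fixes every non-diagonal edge, so at a vertex \<open>(r, c)\<close> of a row
  stratified graph the degree criterion only compares diagonal edges to the rows \<open>r - 1\<close> and
  \<open>r + 1\<close>. Writing \<open>d(r \<rightarrow> r')\<close> for the number of diagonal edges from \<open>(r, c)\<close> into row
  \<open>r'\<close>, the criterion at \<open>(r + 1, c)\<close> reads
  \<open>d(r+1 \<rightarrow> r) + d(r+1 \<rightarrow> r+2) = d(r \<rightarrow> r+1) + d(r+2 \<rightarrow> r+1)\<close>; as row 0 is empty,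
  induction on \<open>r\<close> gives \<open>d(r \<rightarrow> r+1) = d(r+1 \<rightarrow> r)\<close> for all \<open>r\<close>. In \<open>S\<^sub>r\<close> these two
  numbers are the degrees of \<open>(r, c)\<close> and \<open>(r + 1, c)\<close>, and the partial transpose swaps
  them, so \<open>S\<^sub>r\<close> satisfies the criterion. The column case follows by transposing the grid.\<close>

definition neighbours :: "edgeset \<Rightarrow> vertex \<Rightarrow> vertex set" where
  "neighbours F v = {w. {v, w} \<in> F}"

lemma grid_graph_edgeE:
  assumes "grid_graph a b F" "e \<in> F"
  obtains v w where "e = {v, w}" "v \<noteq> w" "v \<in> grid a b" "w \<in> grid a b"
  using assms unfolding grid_graph_def by meson

lemma grid_graph_edge_in_grid:
  assumes "grid_graph a b F" "{v, w} \<in> F"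
  shows "v \<in> grid a b" "w \<in> grid a b"
  using grid_graph_edgeE[OF assms] by (metis doubleton_eq_iff)+

lemma grid_graph_edge_neq:
  assumes "grid_graph a b F" "{v, w} \<in> F"
  shows "v \<noteq> w"
  using grid_graph_edgeE[OF assms] by (metis doubleton_eq_iff)

lemma grid_graph_subset: "grid_graph a b F \<Longrightarrow> G \<subseteq> F \<Longrightarrow> grid_graph a b G"
  unfolding grid_graph_def by blast

lemma finite_neighbours: "grid_graph a b F \<Longrightarrow> finite (neighbours F v)"
proof (rule finite_subset)
  show "neighbours F v \<subseteq> grid a b" if "grid_graph a b F"
    unfolding neighbours_def using grid_graph_edge_in_grid(2)[OF that] by blast
qed (simp add: grid_def)

lemma degree_eq_card_neighbours:
  assumes "grid_graph a b F"
  shows "degree F v = card (neighbours F v)"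
proof -
  have "bij_betw (\<lambda>w. {v, w}) (neighbours F v) {e \<in> F. v \<in> e}"
  proof (rule bij_betwI')
    show "{v, x} = {v, y} \<longleftrightarrow> x = y" if "x \<in> neighbours F v" "y \<in> neighbours F v" for x y
      using that grid_graph_edge_neq[OF assms] by (auto simp: neighbours_def doubleton_eq_iff)
    show "\<exists>w \<in> neighbours F v. e = {v, w}" if e: "e \<in> {e \<in> F. v \<in> e}" for e
    proof -
      obtain x y where "e = {x, y}"
        using e grid_graph_edgeE[OF assms] by blast
      with e have "e = {v, if v = x then y else x}" "e \<in> F"
        by auto
      then show ?thesis
        unfolding neighbours_def by blast
    qed
  qed (auto simp: neighbours_def)
  then show ?thesis
    unfolding degree_def by (simp add: bij_betw_same_card)
qed

lemma mem_partial_transpose: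
  "{(r, c), (p, q)} \<in> partial_transpose F \<longleftrightarrow> {(p, c), (r, q)} \<in> F"
proof
  assume "{(r, c), (p, q)} \<in> partial_transpose F"
  then obtain i j k l where e: "{(r, c), (p, q)} = {(k, j), (i, l)}" and "{(i, j), (k, l)} \<in> F"
    unfolding partial_transpose_def by blast
  from e have "(r, c) = (k, j) \<and> (p, q) = (i, l) \<or> (r, c) = (i, l) \<and> (p, q) = (k, j)"
    by (simp add: doubleton_eq_iff)
  with \<open>{(i, j), (k, l)} \<in> F\<close> show "{(p, c), (r, q)} \<in> F"
    by (auto simp: insert_commute)
qed (unfold partial_transpose_def, blast)

lemma grid_graph_partial_transpose:
  assumes "grid_graph a b F"
  shows "grid_graph a b (partial_transpose F)"
  unfolding grid_graph_def
proof
  fix e assume "e \<in> partial_transpose F"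
  then obtain r c p q where e: "e = {(r, c), (p, q)}" and E: "{(p, c), (r, q)} \<in> F"
    unfolding partial_transpose_def by blast
  have "(p, c) \<in> grid a b" "(r, q) \<in> grid a b" "(p, c) \<noteq> (r, q)"
    using grid_graph_edge_in_grid[OF assms E] grid_graph_edge_neq[OF assms E] by auto
  then have "(r, c) \<in> grid a b" "(p, q) \<in> grid a b" "(r, c) \<noteq> (p, q)"
    by (auto simp: grid_def)
  with e show "\<exists>u v. e = {u, v} \<and> u \<noteq> v \<and> u \<in> grid a b \<and> v \<in> grid a b"
    by blast
qed

lemma row_stratified_partial_transpose:
  "row_stratified F \<Longrightarrow> row_stratified (partial_transpose F)"
  unfolding row_stratified_def mem_partial_transpose by metis

lemma aligned_neighbours_partial_transpose:
  "{w \<in> neighbours (partial_transpose F) (r, c). fst w = r \<or> snd w = c}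
     = {w \<in> neighbours F (r, c). fst w = r \<or> snd w = c}"
  by (auto simp: neighbours_def mem_partial_transpose insert_commute)

definition diag_degree :: "edgeset \<Rightarrow> vertex \<Rightarrow> nat \<Rightarrow> nat" where
  "diag_degree F v r = card {q. q \<noteq> snd v \<and> {v, (r, q)} \<in> F}"

lemma diag_degree_partial_transpose:
  "diag_degree (partial_transpose F) (r, c) p = diag_degree F (p, c) r"
  by (simp add: diag_degree_def mem_partial_transpose)

lemma card_Pair_image: "card (Pair r ` S) = card S"
  by (rule card_image) (simp add: inj_on_def)

lemma degree_row_stratified:
  assumes F: "grid_graph a b F" and rs: "row_stratified F"
  shows "degree F (Suc p, c) = card {w \<in> neighbours F (Suc p, c). fst w = Suc p \<or> snd w = c}
           + diag_degree F (Suc p, c) p + diag_degree F (Suc p, c) (Suc (Suc p))"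
proof -
  let ?v = "(Suc p, c)"
  let ?A = "{w \<in> neighbours F ?v. fst w = Suc p \<or> snd w = c}"
  define row where "row r = Pair r ` {q. q \<noteq> c \<and> {?v, (r, q)} \<in> F}" for r
  have card_row: "card (row r) = diag_degree F ?v r" for r
    by (simp add: row_def diag_degree_def card_Pair_image)
  have adjacent_row: "r = p \<or> r = Suc (Suc p)" if "{?v, (r, q)} \<in> F" "r \<noteq> Suc p" "q \<noteq> c" for r q
    using rs that unfolding row_stratified_def by fastforce
  have split: "neighbours F ?v = ?A \<union> row p \<union> row (Suc (Suc p))"
  proof (intro set_eqI iffI)
    fix w assume "w \<in> neighbours F ?v"
    moreover obtain r q where "w = (r, q)"
      by fastforce
    ultimately show "w \<in> ?A \<union> row p \<union> row (Suc (Suc p))"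
      using adjacent_row[of r q] by (auto simp: neighbours_def row_def)
  qed (auto simp: neighbours_def row_def)
  have fin: "finite (?A \<union> row p \<union> row (Suc (Suc p)))"
    using finite_neighbours[OF F] by (simp only: split[symmetric])
  have "degree F ?v = card (?A \<union> row p \<union> row (Suc (Suc p)))"
    using degree_eq_card_neighbours[OF F] by (simp only: split[symmetric])
  also have "\<dots> = card (?A \<union> row p) + card (row (Suc (Suc p)))"
    using fin by (intro card_Un_disjoint) (auto simp: row_def)
  also have "card (?A \<union> row p) = card ?A + card (row p)"
    using fin by (intro card_Un_disjoint) (auto simp: row_def)
  finally show ?thesis
    by (simp add: card_row)
qed

lemma degree_partial_transpose_eq_iff:
  assumes F: "grid_graph a b F" and rs: "row_stratified F"
  shows "degree F (Suc p, c) = degree (partial_transpose F) (Suc p, c) \<longleftrightarrow>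
           diag_degree F (Suc p, c) p + diag_degree F (Suc p, c) (Suc (Suc p))
             = diag_degree F (p, c) (Suc p) + diag_degree F (Suc (Suc p), c) (Suc p)"
  using degree_row_stratified[OF F rs, of p c]
    degree_row_stratified[OF grid_graph_partial_transpose[OF F] row_stratified_partial_transpose[OF rs], of p c]
  by (simp add: aligned_neighbours_partial_transpose diag_degree_partial_transpose)

lemma diag_degree_eq_0:
  assumes F: "grid_graph a b F" and out: "v \<notin> grid a b \<or> r \<notin> {1..a}"
  shows "diag_degree F v r = 0"
proof -
  have "v \<in> grid a b \<and> r \<in> {1..a}" if "{v, (r, q)} \<in> F" for q
    using grid_graph_edge_in_grid[OF F that] by (auto simp: grid_def)
  with out have "{q. q \<noteq> snd v \<and> {v, (r, q)} \<in> F} = {}"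
    by blast
  then show ?thesis
    unfolding diag_degree_def by (metis card.empty)
qed

lemma diag_degree_adjacent_rows_sym:
  assumes F: "grid_graph a b F" and rs: "row_stratified F" and dc: "degree_criterion a b F"
  shows "diag_degree F (p, c) (Suc p) = diag_degree F (Suc p, c) p"
proof (induction p)
  case 0
  show ?case
    using diag_degree_eq_0[OF F, of "(0, c)"] diag_degree_eq_0[OF F, of _ 0] by (simp add: grid_def)
next
  case (Suc p)
  show ?case
  proof (cases "(Suc p, c) \<in> grid a b")
    case True
    then have "degree F (Suc p, c) = degree (partial_transpose F) (Suc p, c)"
      using dc unfolding degree_criterion_def by blast
    with Suc.IH show ?thesis
      unfolding degree_partial_transpose_eq_iff[OF F rs] by simp
  next
    case False
    then have "(Suc (Suc p), c) \<notin> grid a b"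
      by (auto simp: grid_def)
    with False show ?thesis
      using diag_degree_eq_0[OF F] by simp
  qed
qed

lemma diagonal_doubleton: "diagonal {(r, c), (p, q)} \<longleftrightarrow> r \<noteq> p \<and> c \<noteq> q"
proof
  assume "diagonal {(r, c), (p, q)}"
  then obtain i j k l where e: "{(r, c), (p, q)} = {(i, j), (k, l)}" and "i \<noteq> k" "j \<noteq> l"
    unfolding diagonal_def by blast
  from e have "(r, c) = (i, j) \<and> (p, q) = (k, l) \<or> (r, c) = (k, l) \<and> (p, q) = (i, j)"
    by (simp add: doubleton_eq_iff)
  with \<open>i \<noteq> k\<close> \<open>j \<noteq> l\<close> show "r \<noteq> p \<and> c \<noteq> q"
    by auto
qed (unfold diagonal_def, blast)

lemma mem_row_slice:
  "{(r, c), (p, q)} \<in> row_slice F i \<longleftrightarrow>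
     {(r, c), (p, q)} \<in> F \<and> c \<noteq> q \<and> (r = i \<and> p = Suc i \<or> r = Suc i \<and> p = i)"
proof -
  have "(\<exists>j l. {(r, c), (p, q)} = {(i, j), (i + 1, l)}) \<longleftrightarrow> r = i \<and> p = Suc i \<or> r = Suc i \<and> p = i"
    by (auto simp: doubleton_eq_iff)
  then show ?thesis
    unfolding row_slice_def mem_Collect_eq diagonal_doubleton by auto
qed

lemma row_slice_subset: "row_slice F i \<subseteq> F"
  unfolding row_slice_def by blast

lemma row_stratified_row_slice: "row_stratified (row_slice F i)"
  unfolding row_stratified_def mem_row_slice by auto

lemma diag_degree_row_slice:
  "diag_degree (row_slice F i) (r, c) p =
     (if r = i \<and> p = Suc i \<or> r = Suc i \<and> p = i then diag_degree F (r, c) p else 0)"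
  unfolding diag_degree_def mem_row_slice by (auto intro!: arg_cong[where f = card])

lemma degree_criterion_row_slice:
  assumes F: "grid_graph a b F" and rs: "row_stratified F" and dc: "degree_criterion a b F"
  shows "degree_criterion a b (row_slice F i)"
  unfolding degree_criterion_def
proof
  fix v assume "v \<in> grid a b"
  then obtain r c where "v = (r, c)" "0 < r"
    by (auto simp: grid_def)
  then obtain p where v: "v = (Suc p, c)"
    using gr0_implies_Suc by blast
  have S: "grid_graph a b (row_slice F i)"
    using F row_slice_subset by (rule grid_graph_subset)
  have "diag_degree F (i, c) (Suc i) = diag_degree F (Suc i, c) i"
    using F rs dc by (rule diag_degree_adjacent_rows_sym)
  then show "degree (row_slice F i) v = degree (partial_transpose (row_slice F i)) v"
    unfolding v degree_partial_transpose_eq_iff[OF S row_stratified_row_slice] diag_degree_row_slice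
    by auto
qed

definition transpose_grid :: "edgeset \<Rightarrow> edgeset" where
  "transpose_grid F = image prod.swap ` F"

lemma image_swap_swap [simp]: "prod.swap ` prod.swap ` A = A"
  by (simp add: image_comp)

lemma swap_image_eq_doubleton: "prod.swap ` e = {x, y} \<longleftrightarrow> e = {prod.swap x, prod.swap y}"
  by (metis image_empty image_insert image_swap_swap swap_swap)

lemma mem_transpose_grid: "e \<in> transpose_grid F \<longleftrightarrow> prod.swap ` e \<in> F"
proof
  assume "e \<in> transpose_grid F"
  then obtain e' where "e' \<in> F" "e = prod.swap ` e'"
    unfolding transpose_grid_def by blast
  then show "prod.swap ` e \<in> F"
    by simp
next
  assume "prod.swap ` e \<in> F"
  then have "prod.swap ` prod.swap ` e \<in> transpose_grid F"
    unfolding transpose_grid_def by (rule imageI)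
  then show "e \<in> transpose_grid F"
    by simp
qed

lemma card_transpose_grid: "card (transpose_grid F) = card F"
  unfolding transpose_grid_def by (rule card_image) (rule inj_on_image, simp)

lemma mem_transpose_grid_doubleton: "{(i, j), (k, l)} \<in> transpose_grid F \<longleftrightarrow> {(j, i), (l, k)} \<in> F"
  by (simp add: mem_transpose_grid)

lemma swap_mem_grid: "prod.swap v \<in> grid b a \<longleftrightarrow> v \<in> grid a b"
  by (cases v) (auto simp: grid_def)

lemma grid_graph_transpose_grid:
  assumes F: "grid_graph a b F"
  shows "grid_graph b a (transpose_grid F)"
  unfolding grid_graph_def
proof
  fix e assume "e \<in> transpose_grid F"
  then have "prod.swap ` e \<in> F"
    by (simp add: mem_transpose_grid)
  with F obtain v w where "prod.swap ` e = {v, w}" "v \<noteq> w" "v \<in> grid a b" "w \<in> grid a b"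
    by (rule grid_graph_edgeE)
  then have "e = {prod.swap v, prod.swap w}" "prod.swap v \<noteq> prod.swap w"
      "prod.swap v \<in> grid b a" "prod.swap w \<in> grid b a"
    by (auto simp: swap_image_eq_doubleton swap_mem_grid inj_eq[OF inj_swap])
  then show "\<exists>u v. e = {u, v} \<and> u \<noteq> v \<and> u \<in> grid b a \<and> v \<in> grid b a"
    by blast
qed

lemma row_stratified_transpose_grid: "col_stratified F \<Longrightarrow> row_stratified (transpose_grid F)"
  unfolding col_stratified_def row_stratified_def mem_transpose_grid_doubleton by blast

lemma degree_transpose_grid: "degree (transpose_grid F) (prod.swap v) = degree F v"
proof -
  have "{e \<in> transpose_grid F. prod.swap v \<in> e} = transpose_grid {e \<in> F. v \<in> e}"
    by (cases v) (auto simp: mem_transpose_grid)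
  then show ?thesis
    unfolding degree_def by (simp add: card_transpose_grid)
qed

lemma partial_transpose_transpose_grid:
  "partial_transpose (transpose_grid F) = transpose_grid (partial_transpose F)"
proof (intro set_eqI)
  fix e
  have "e \<in> transpose_grid (partial_transpose F) \<longleftrightarrow>
      (\<exists>i j k l. e = {(j, k), (l, i)} \<and> {(i, j), (k, l)} \<in> F)"
    unfolding mem_transpose_grid partial_transpose_def by (simp add: swap_image_eq_doubleton)
  also have "\<dots> \<longleftrightarrow> e \<in> partial_transpose (transpose_grid F)"
    unfolding partial_transpose_def mem_transpose_grid_doubleton by (auto simp: insert_commute)
  finally show "e \<in> partial_transpose (transpose_grid F) \<longleftrightarrow> e \<in> transpose_grid (partial_transpose F)"
    by simp
qed

lemma degree_criterion_transpose_grid: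
  assumes "degree_criterion a b F"
  shows "degree_criterion b a (transpose_grid F)"
  unfolding degree_criterion_def
proof
  fix v assume "v \<in> grid b a"
  then have "prod.swap v \<in> grid a b"
    using swap_mem_grid[of "prod.swap v"] by simp
  then have "degree F (prod.swap v) = degree (partial_transpose F) (prod.swap v)"
    using assms unfolding degree_criterion_def by blast
  then show "degree (transpose_grid F) v = degree (partial_transpose (transpose_grid F)) v"
    using degree_transpose_grid[of F "prod.swap v"] degree_transpose_grid[of "partial_transpose F" "prod.swap v"]
    by (simp add: partial_transpose_transpose_grid)
qed

lemma diagonal_swap_image: "diagonal (prod.swap ` e) \<longleftrightarrow> diagonal e"
  unfolding diagonal_def swap_image_eq_doubleton by auto

lemma col_slice_eq_transpose_row_slice:
  "col_slice F j = transpose_grid (row_slice (transpose_grid F) j)"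
  unfolding col_slice_def row_slice_def
  by (auto simp: mem_transpose_grid diagonal_swap_image swap_image_eq_doubleton diagonal_doubleton; blast)

theorem mainTheorem9:
  fixes a b :: nat and E :: edgeset
  assumes "grid_graph a b E"
  shows "(row_stratified E \<and> degree_criterion a b E \<longrightarrow>
            (\<forall>i. 1 \<le> i \<and> i < a \<longrightarrow> degree_criterion a b (row_slice E i)))
       \<and> (col_stratified E \<and> degree_criterion a b E \<longrightarrow>
            (\<forall>j. 1 \<le> j \<and> j < b \<longrightarrow> degree_criterion a b (col_slice E j)))"
proof (intro conjI impI allI)
  fix i assume "row_stratified E \<and> degree_criterion a b E"
  then show "degree_criterion a b (row_slice E i)"
    using degree_criterion_row_slice[OF assms] by blast
next
  fix j assume "col_stratified E \<and> degree_criterion a b E"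
  then have "degree_criterion b a (row_slice (transpose_grid E) j)"
    using degree_criterion_row_slice[OF grid_graph_transpose_grid[OF assms]
        row_stratified_transpose_grid degree_criterion_transpose_grid] by blast
  then have "degree_criterion a b (transpose_grid (row_slice (transpose_grid E) j))"
    by (rule degree_criterion_transpose_grid)
  then show "degree_criterion a b (col_slice E j)"
    by (simp only: col_slice_eq_transpose_row_slice)
qed

end
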